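(* Let $q$ be a prime power and let $M=(m_{ij})$ be a $2\times 2$ matrix with all $m_{ij}\in\mathbb{F}_q$. Let $N=(n_{ij})$ be the $2\times 2$ matrix with $n_{11}=m_{11}$, $n_{22}=m_{22}$, $n_{21}=0$, $n_{12}=m_{12}+m_{21}$. Then $\mathrm{Num}'_0(M)_q=\mathrm{Num}'_0(N)_q$ and $\mathrm{Num}_k(M)_q=\mathrm{Num}_k(N)_q$ for all $k\in\mathbb{F}_q$. Moreover: (i) If $q\equiv -1\pmod 4$, then $\mathrm{Num}'_0(M)_q=\emptyset$. (ii) Assume $q$ is even. If $m_{22}+m_{12}+m_{21}+m_{11}\neq 0$, then $\mathrm{Num}'_0(M)_q=\mathbb{F}_q^*$ and $\sharp(\mathrm{Num}_k(M)_q)\ge q/2$ for all $k\in\mathbb{F}_q^*$. If $m_{22}+m_{12}+m_{21}+m_{11}=0$, then $\mathrm{Num}'_0(M)_q=\{0\}$ and for each fixed $k\in\mathbb{F}_q^*$ either $\mathrm{Num}_k(M)_q=\mathbb{F}_q$ or $\sharp(\mathrm{Num}_k(M)_q)=1$. If $m_{12}+m_{21}=0$ and $m_{11}\neq m_{22}$, then $\mathrm{Num}_k(M)_q=\mathbb{F}_q$ for all $k\in\mathbb{F}_q^*$. (iii) Assume $q\equiv 1\pmod 4$. (iii1) If $m_{12}+m_{21}\neq 0$, then $\mathrm{Num}_0(M)_q$ contains at least $(q-1)/2$ elements of $\mathbb{F}_q^*$. (iii2) Assume $m_{12}+m_{21}=0$. If $m_{11}=m_{22}$, then $\mathrm{Num}_k(M)_q=\{km_{11}\}$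 for all $k\in\mathbb{F}_q$ and $0\in\mathrm{Num}'_0(M)_q$. If $m_{11}\neq m_{22}$, then $\sharp(\mathrm{Num}_k(M)_q)\le (q+1)/2$ for all $k\in\mathbb{F}_q$, $\sharp(\mathrm{Num}_0(M)_q)=(q+1)/2$ and $\sharp(\mathrm{Num}'_0(M)_q)=(q-1)/2$.
   Context: The Hermitian form on $\mathbb{F}_{q^2}^n$ is $\langle u,v\rangle=\sum_i u_i^q v_i$; for $u=(x_1,\dots,x_n)\in\mathbb{F}_q^n$ and $M=(m_{ij})$ with entries in $\mathbb{F}_q$ one has $\langle u,u\rangle=\sum_i x_i^2$ and $\langle u,Mu\rangle=\sum_{i,j}m_{ij}x_ix_j$. For such $M$ and $k\in\mathbb{F}_q$, $\mathrm{Num}_k(M)_q=\{\langle u,Mu\rangle: u\in\mathbb{F}_q^n,\ \langle u,u\rangle=k\}$, and (for $n\ge 2$) $\mathrm{Num}'_0(M)_q=\{\langle u,Mu\rangle: u\in\mathbb{F}_q^n\setminus\{0\},\ \langle u,u\rangle=0\}$. *)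

theory Defs
  imports "HOL-Analysis.Finite_Cartesian_Product"
begin

text \<open>The finite field F_q is a type 'a of class {field, finite}; q = CARD('a).\<close>

definition herm_self :: "'a::{field,finite}^'n \<Rightarrow> 'a" where
  "herm_self u = (\<Sum>i\<in>UNIV. (u$i)^2)"

definition herm_M :: "'a::{field,finite}^'n^'n \<Rightarrow> 'a^'n \<Rightarrow> 'a" where
  "herm_M M u = (\<Sum>i\<in>UNIV. \<Sum>j\<in>UNIV. M$i$j * u$i * u$j)"

definition Num :: "'a::{field,finite}^'n^'n \<Rightarrow> 'a \<Rightarrow> 'a set" where
  "Num M k = {herm_M M u | u. herm_self u = k}"

definition Num0' :: "'a::{field,finite}^'n^'n \<Rightarrow> 'a set" where
  "Num0' M = {herm_M M u | u. u \<noteq> 0 \<and> herm_self u = 0}"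

end

theory Submission
  imports Defs "HOL-Analysis.Cartesian_Space" "HOL-Library.Z2" "HOL-Library.Disjoint_Sets"
begin

text \<open>
  For u = (x, y) the form \<langle>u, Mu\<rangle> is a x^2 + c x y + b y^2 with a = m11, b = m22 and
  c = m12 + m21, so M and N have the same numerical ranges, and everything is about the
  values of this binary form on the conics x^2 + y^2 = k.

  In characteristic 2 squaring is an additive bijection, so x^2 + y^2 = (x + y)^2 and the
  conic x^2 + y^2 = t^2 is the line y = x + t. On it the form is a polynomial in x of
  degree at most 2 with leading coefficient a + b + c, which gives all the claims.

  In odd characteristic, the nonzero isotropic vectors are (\<plusminus>i y, y) with i^2 = -1, on
  which the form takes the values (b - a \<plusminus> c i) y^2. Such an i exists iff q \<equiv> 1 mod 4:
  inversion pairs off the (q - 1)/2 nonzero squares, and its fixed points are 1 and,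
  if it is a square, -1.
\<close>

section \<open>Squares in finite fields\<close>

lemma even_card_iff_even_card_fixpoints:
  assumes "finite S" and "\<And>x. x \<in> S \<Longrightarrow> f x \<in> S" and "\<And>x. x \<in> S \<Longrightarrow> f (f x) = x"
  shows "even (card S) \<longleftrightarrow> even (card {x\<in>S. f x = x})"
proof -
  let ?F = "{x\<in>S. f x = x}"
  \<comment> \<open>counted in \<open>\<int>/2\<close>, the points outside ?F cancel in pairs {x, f x}\<close>
  have "of_nat (card (S - ?F)) = (\<Sum>x\<in>S - ?F. 1::bit)"
    by simp
  also have "\<dots> = 0"
    by (rule sum_involution_eq_0[where h = f]) (use assms in auto)
  finally have "even (card (S - ?F))"
    by (metis even_of_nat even_zero)
  moreover have "card S = card (S - ?F) + card ?F"
    using assms(1) by (simp add: card_Diff_subset card_mono)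
  ultimately show ?thesis
    by simp
qed

text \<open>The involution x \<mapsto> -1 - x has the single fixed point -1/2 if 2 \<noteq> 0, and none otherwise.\<close>
lemma even_CARD_iff_two_eq_zero: "even CARD('a::{field,finite}) \<longleftrightarrow> (2::'a) = 0"
proof -
  have "even CARD('a) \<longleftrightarrow> even (card {x::'a. - 1 - x = x})"
    using even_card_iff_even_card_fixpoints[of UNIV "\<lambda>x::'a. - 1 - x"] by simp
  also have "{x::'a. - 1 - x = x} = (if (2::'a) = 0 then {} else {- 1 / 2})"
    by (auto simp: field_simps)
  finally show ?thesis
    by simp
qed

definition nonzero_squares :: "'a::comm_ring_1 set" where
  "nonzero_squares = (\<lambda>x. x^2) ` (UNIV - {0})"

lemma zero_notin_nonzero_squares: "0 \<notin> (nonzero_squares :: 'a::idom set)"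
  unfolding nonzero_squares_def by auto

lemma range_power2_eq: "range (\<lambda>x::'a::comm_ring_1. x^2) = insert 0 nonzero_squares"
proof -
  have "range (\<lambda>x::'a. x^2) = (\<lambda>x. x^2) ` insert 0 (UNIV - {0})"
    by simp
  also have "\<dots> = insert 0 nonzero_squares"
    unfolding nonzero_squares_def image_insert by simp
  finally show ?thesis .
qed

lemma card_nonzero_squares:
  assumes "(2::'a::{field,finite}) \<noteq> 0"
  shows "2 * card (nonzero_squares :: 'a set) + 1 = CARD('a)"
proof -
  have roots: "{x. x \<noteq> 0 \<and> x^2 = r^2} = {r, -r}" if "r \<noteq> 0" for r :: 'a
    using that by (auto simp: power2_eq_iff)
  have fibre: "card {x. x \<noteq> 0 \<and> x^2 = v} = 2" if v: "v \<in> nonzero_squares" for v :: 'a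
  proof -
    obtain r where "r \<noteq> 0" "v = r^2"
      using v unfolding nonzero_squares_def by blast
    moreover have "r \<noteq> - r"
      using \<open>r \<noteq> 0\<close> assms by (metis add_eq_0_iff2 mult_2 mult_eq_0_iff)
    ultimately show ?thesis
      using roots by simp
  qed
  have "UNIV - {0::'a} = (\<Union>v\<in>nonzero_squares. {x. x \<noteq> 0 \<and> x^2 = v})"
    unfolding nonzero_squares_def by auto
  then have "card (UNIV - {0::'a}) = (\<Sum>v\<in>nonzero_squares. card {x::'a. x \<noteq> 0 \<and> x^2 = v})"
    by (simp only:) (rule card_UN_disjoint, auto)
  also have "\<dots> = 2 * card (nonzero_squares :: 'a set)"
    using fibre by simp
  finally have "CARD('a) - 1 = 2 * card (nonzero_squares :: 'a set)"
    by (simp add: card_Diff_singleton)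
  moreover have "0 < CARD('a)"
    by (simp add: card_gt_0_iff)
  ultimately show ?thesis
    by linarith
qed

lemma real_card_nonzero_squares:
  assumes "(2::'a::{field,finite}) \<noteq> 0"
  shows "real (card (nonzero_squares :: 'a set)) = (real CARD('a) - 1) / 2"
  using arg_cong[OF card_nonzero_squares[OF assms], of real] by simp

lemma minus_one_in_nonzero_squares_iff:
  assumes "(2::'a::{field,finite}) \<noteq> 0"
  shows "(- 1 :: 'a) \<in> nonzero_squares \<longleftrightarrow> even (card (nonzero_squares :: 'a set))"
proof -
  have inverse_square: "inverse v \<in> nonzero_squares" if v: "v \<in> nonzero_squares" for v :: 'a
  proof -
    obtain x where "x \<noteq> 0" "v = x^2"
      using v unfolding nonzero_squares_def by blast
    then have "inverse x \<noteq> 0" "inverse v = (inverse x)^2"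
      by (simp_all add: power_inverse)
    then show ?thesis
      unfolding nonzero_squares_def by blast
  qed
  have "(1::'a) \<noteq> - 1"
    using assms by (metis one_add_one neg_eq_iff_add_eq_0)
  moreover have "1 \<in> (nonzero_squares :: 'a set)"
    unfolding nonzero_squares_def by (metis DiffI UNIV_I image_eqI one_neq_zero one_power2 singletonD)
  moreover have "inverse x = x \<longleftrightarrow> x = 1 \<or> x = - 1" if "x \<in> nonzero_squares" for x :: 'a
    using that zero_notin_nonzero_squares[where 'a='a]
    by (metis inverse_unique left_inverse power2_eq_iff power2_eq_square square_eq_1_iff)
  ultimately have "{x \<in> nonzero_squares. inverse x = x} = insert 1 ({- 1} \<inter> (nonzero_squares :: 'a set))"
    by auto
  moreover have "even (card (nonzero_squares :: 'a set))
      \<longleftrightarrow> even (card {x \<in> nonzero_squares. inverse x = (x::'a)})"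
    by (rule even_card_iff_even_card_fixpoints) (simp_all add: inverse_square)
  ultimately show ?thesis
    using \<open>1 \<noteq> - 1\<close> by (cases "(- 1 :: 'a) \<in> nonzero_squares") simp_all
qed

lemma ex_sqrt_minus_one_iff:
  assumes "(2::'a::{field,finite}) \<noteq> 0"
  shows "(\<exists>i::'a. i^2 = - 1) \<longleftrightarrow> CARD('a) mod 4 = 1"
proof -
  have "(\<exists>i::'a. i^2 = - 1) \<longleftrightarrow> (- 1 :: 'a) \<in> nonzero_squares"
  proof
    assume "\<exists>i::'a. i^2 = - 1"
    then obtain i :: 'a where "i^2 = - 1" ..
    moreover from this have "i \<noteq> 0"
      by auto
    ultimately show "(- 1 :: 'a) \<in> nonzero_squares"
      unfolding nonzero_squares_def by force
  qed (auto simp: nonzero_squares_def)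
  also have "\<dots> \<longleftrightarrow> even (card (nonzero_squares :: 'a set))"
    by (rule minus_one_in_nonzero_squares_iff[OF assms])
  also have "\<dots> \<longleftrightarrow> CARD('a) mod 4 = 1"
    using card_nonzero_squares[OF assms] by presburger
  finally show ?thesis .
qed

section \<open>Values of the binary form on the conics x^2 + y^2 = k\<close>

definition form_values :: "'a::comm_ring_1 \<Rightarrow> 'a \<Rightarrow> 'a \<Rightarrow> 'a \<Rightarrow> 'a set" where
  "form_values a b c k = {a * x^2 + c * x * y + b * y^2 | x y. x^2 + y^2 = k}"

definition isotropic_form_values :: "'a::comm_ring_1 \<Rightarrow> 'a \<Rightarrow> 'a \<Rightarrow> 'a set" where
  "isotropic_form_values a b c =
     {a * x^2 + c * x * y + b * y^2 | x y. (x \<noteq> 0 \<or> y \<noteq> 0) \<and> x^2 + y^2 = 0}"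

lemma herm_self_vec2: "herm_self (u::'a::{field,finite}^2) = (u$1)^2 + (u$2)^2"
  unfolding herm_self_def sum_2 ..

lemma herm_M_vec2:
  "herm_M (M::'a::{field,finite}^2^2) u
     = M$1$1 * (u$1)^2 + (M$1$2 + M$2$1) * u$1 * u$2 + M$2$2 * (u$2)^2"
  unfolding herm_M_def sum_2 by (simp add: algebra_simps power2_eq_square)

lemma vec2_eq_0_iff: "(u::'a::zero^2) = 0 \<longleftrightarrow> u$1 = 0 \<and> u$2 = 0"
  by (simp add: vec_eq_iff forall_2)

lemma setcompr_vec2: "{f (u$1) (u$2) | u::'a::zero^2. P (u$1) (u$2)} = {f x y | x y. P x y}"
  by (auto; metis vector_2)

lemma Num_eq_form_values:
  "Num (M::'a::{field,finite}^2^2) k = form_values (M$1$1) (M$2$2) (M$1$2 + M$2$1) k"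
  unfolding Num_def form_values_def herm_M_vec2 herm_self_vec2 by (rule setcompr_vec2)

lemma Num0'_eq_isotropic_form_values:
  "Num0' (M::'a::{field,finite}^2^2) = isotropic_form_values (M$1$1) (M$2$2) (M$1$2 + M$2$1)"
  unfolding Num0'_def isotropic_form_values_def herm_M_vec2 herm_self_vec2 vec2_eq_0_iff de_Morgan_conj
  by (rule setcompr_vec2)

lemma form_values_zero: "form_values a b c 0 = insert 0 (isotropic_form_values a b c)"
  unfolding form_values_def isotropic_form_values_def
proof (rule equalityI)
  show "{a * x^2 + c * x * y + b * y^2 | x y. x^2 + y^2 = 0}
    \<subseteq> insert 0 {a * x^2 + c * x * y + b * y^2 | x y. (x \<noteq> 0 \<or> y \<noteq> 0) \<and> x^2 + y^2 = 0}"
  proof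
    fix v
    assume "v \<in> {a * x^2 + c * x * y + b * y^2 | x y. x^2 + y^2 = 0}"
    then obtain x y where "v = a * x^2 + c * x * y + b * y^2" "x^2 + y^2 = 0"
      by blast
    then show "v \<in> insert 0 {a * x^2 + c * x * y + b * y^2 | x y. (x \<noteq> 0 \<or> y \<noteq> 0) \<and> x^2 + y^2 = 0}"
      by (cases "x = 0 \<and> y = 0") auto
  qed
  have "0 = a * 0^2 + c * 0 * 0 + b * 0^2 \<and> (0::'a)^2 + 0^2 = 0"
    by simp
  then show "insert 0 {a * x^2 + c * x * y + b * y^2 | x y. (x \<noteq> 0 \<or> y \<noteq> 0) \<and> x^2 + y^2 = 0}
    \<subseteq> {a * x^2 + c * x * y + b * y^2 | x y. x^2 + y^2 = 0}"
    by blast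
qed

lemma isotropic_form_values_eq_empty:
  assumes "\<nexists>i::'a::field. i^2 = - 1"
  shows "isotropic_form_values a b (c::'a) = {}"
proof -
  have "x = 0 \<and> y = 0" if sum: "x^2 + y^2 = (0::'a)" for x y
  proof -
    have "y = 0"
    proof (rule ccontr)
      assume "y \<noteq> 0"
      with sum have "(x / y)^2 = - 1"
        by (simp add: power_divide field_simps eq_neg_iff_add_eq_0)
      with assms show False
        by blast
    qed
    with sum show ?thesis
      by simp
  qed
  then show ?thesis
    unfolding isotropic_form_values_def by blast
qed

lemma form_at_isotropic:
  fixes a b c s y :: "'a::comm_ring_1"
  assumes "s^2 = - 1"
  shows "a * (s * y)^2 + c * (s * y) * y + b * y^2 = (b - a + c * s) * y^2"
proof -
  have "a * (s * y)^2 + c * (s * y) * y + b * y^2 = (b - a + c * s) * y^2 + a * y^2 * (s^2 + 1)"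
    by (simp add: power2_eq_square algebra_simps)
  with assms show ?thesis
    by simp
qed

lemma card_range_quadratic:
  fixes s d e :: "'a::{field,finite}"
  assumes "s \<noteq> 0"
  shows "CARD('a) \<le> 2 * card (range (\<lambda>x. s * x^2 + d * x + e))"
proof -
  let ?g = "\<lambda>x. s * x^2 + d * x + e"
  have fibre: "card {x. ?g x = v} \<le> 2" if "v \<in> range ?g" for v
  proof -
    obtain x0 where v: "v = ?g x0"
      using \<open>v \<in> range ?g\<close> by blast
    have factor: "?g x - ?g x0 = (x - x0) * (s * (x + x0) + d)" for x
      by (simp add: power2_eq_square algebra_simps)
    have "{x. ?g x = v} \<subseteq> {x0, - d / s - x0}"
    proof
      fix x
      assume "x \<in> {x. ?g x = v}"
      then have "x = x0 \<or> s * (x + x0) + d = 0"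
        using factor[of x] v by simp
      with assms show "x \<in> {x0, - d / s - x0}"
        by (auto simp: field_simps eq_neg_iff_add_eq_0 add_ac)
    qed
    then have "card {x. ?g x = v} \<le> card {x0, - d / s - x0}"
      by (rule card_mono[rotated]) simp
    also have "\<dots> \<le> 2"
      by (simp add: card_insert_if)
    finally show ?thesis .
  qed
  have "CARD('a) = card (\<Union>v\<in>range ?g. {x. ?g x = v})"
    by (rule arg_cong[where f = card]) auto
  also have "\<dots> \<le> (\<Sum>v\<in>range ?g. card {x. ?g x = v})"
    by (rule card_UN_le) simp
  also have "\<dots> \<le> (\<Sum>v\<in>range ?g. 2)"
    using fibre by (rule sum_mono)
  finally show ?thesis
    by simp
qed

section \<open>Characteristic 2\<close>

context
  assumes char2: "(2::'a::{field,finite}) = 0"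
begin

lemma char2_uminus: "- x = (x::'a)"
proof -
  have "x + x = 0"
    using char2 by (metis mult_2 mult_zero_left)
  then show ?thesis
    by (rule minus_unique)
qed

lemma char2_power2_add: "(x + y)^2 = x^2 + (y::'a)^2"
proof -
  have "(x + y)^2 = x^2 + y^2 + 2 * (x * y)"
    by (simp add: power2_eq_square algebra_simps)
  with char2 show ?thesis
    by simp
qed

lemma char2_power2_eq_iff: "x^2 = y^2 \<longleftrightarrow> x = (y::'a)"
proof -
  have "x^2 = y^2 \<longleftrightarrow> (x + y)^2 = 0"
    using neg_eq_iff_add_eq_0[of "x^2" "y^2"] char2_uminus[of "x^2"] by (simp add: char2_power2_add)
  also have "\<dots> \<longleftrightarrow> x = y"
    using neg_eq_iff_add_eq_0[of x y] char2_uminus[of x] by simp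
  finally show ?thesis .
qed

lemma char2_ex_sqrt: "\<exists>t. t^2 = (k::'a)"
proof -
  have "surj (\<lambda>x::'a. x^2)"
    using finite_UNIV_inj_surj[of "\<lambda>x::'a. x^2"] by (simp add: inj_def char2_power2_eq_iff)
  then show ?thesis
    by (metis surjD)
qed

lemma char2_circle_iff:
  assumes "t^2 = k"
  shows "x^2 + y^2 = k \<longleftrightarrow> y = x + (t::'a)"
proof -
  have "x^2 + y^2 = k \<longleftrightarrow> x + y = t"
    unfolding char2_power2_add[symmetric] assms[symmetric] char2_power2_eq_iff ..
  also have "\<dots> \<longleftrightarrow> y = x + t"
    using char2_uminus[of x] by (auto simp: algebra_simps)
  finally show ?thesis .
qed

lemma char2_form_at_circle:
  "a * x^2 + c * x * (x + t) + b * (x + t)^2 = (a + b + c) * x^2 + c * t * x + b * (t::'a)^2"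
  unfolding char2_power2_add by (simp add: power2_eq_square algebra_simps)

lemma char2_form_values:
  assumes "t^2 = k"
  shows "form_values a b c k = range (\<lambda>x::'a. (a + b + c) * x^2 + c * t * x + b * t^2)"
  unfolding form_values_def char2_circle_iff[OF assms] char2_form_at_circle[symmetric] by blast

lemma char2_isotropic_form_values:
  "isotropic_form_values a b c = {(a + b + c) * x^2 | x::'a. x \<noteq> 0}"
  using char2_form_at_circle[of a _ c 0 b]
  unfolding isotropic_form_values_def char2_circle_iff[of 0 0, simplified] by auto

lemma char2_isotropic_form_values_nonzero:
  assumes "a + b + c \<noteq> (0::'a)"
  shows "isotropic_form_values a b c = UNIV - {0}"
proof -
  have "v \<in> {(a + b + c) * x^2 | x. x \<noteq> 0}" if "v \<noteq> 0" for v
  proof -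
    obtain x where x: "x^2 = v / (a + b + c)"
      using char2_ex_sqrt by blast
    with assms \<open>v \<noteq> 0\<close> have "x \<noteq> 0" "v = (a + b + c) * x^2"
      by auto
    then show ?thesis
      by blast
  qed
  with assms show ?thesis
    unfolding char2_isotropic_form_values by auto
qed

lemma char2_isotropic_form_values_zero:
  assumes "a + b + c = (0::'a)"
  shows "isotropic_form_values a b c = {0}"
  unfolding char2_isotropic_form_values assms by (auto intro: exI[of _ 1])

lemma char2_card_form_values:
  assumes "a + b + c \<noteq> (0::'a)"
  shows "real CARD('a) / 2 \<le> real (card (form_values a b c k))"
proof -
  obtain t where "t^2 = k"
    using char2_ex_sqrt by blast
  then have "CARD('a) \<le> 2 * card (form_values a b c k)"
    using card_range_quadratic[OF assms] by (simp add: char2_form_values)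
  then show ?thesis
    by linarith
qed

lemma char2_form_values_UNIV_or_singleton:
  assumes "a + b + c = (0::'a)"
  shows "form_values a b c k = UNIV \<or> card (form_values a b c k) = 1"
proof -
  obtain t where "t^2 = k"
    using char2_ex_sqrt by blast
  then have range_eq: "form_values a b c k = range (\<lambda>x. c * t * x + b * t^2)"
    using assms by (simp add: char2_form_values)
  show ?thesis
  proof (cases "c * t = 0")
    case True
    show ?thesis
      unfolding range_eq True by simp
  next
    case False
    then have "v = c * t * ((v - b * t^2) / (c * t)) + b * t^2" for v
      by simp
    then show ?thesis
      unfolding range_eq by (metis UNIV_eq_I rangeI)
  qed
qed

lemma char2_form_values_UNIV:
  assumes "c = 0" and "a \<noteq> (b::'a)"
  shows "form_values a b c k = UNIV"
proof -
  obtain t where "t^2 = k"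
    using char2_ex_sqrt by blast
  then have range_eq: "form_values a b c k = range (\<lambda>x. (a + b) * x^2 + b * t^2)"
    using assms(1) by (simp add: char2_form_values)
  have "a + b \<noteq> 0"
  proof
    assume "a + b = 0"
    then have "a = - b"
      by (simp add: eq_neg_iff_add_eq_0)
    with assms(2) char2_uminus[of b] show False
      by simp
  qed
  have "v \<in> range (\<lambda>x. (a + b) * x^2 + b * t^2)" for v
  proof -
    obtain x where "x^2 = (v - b * t^2) / (a + b)"
      using char2_ex_sqrt by blast
    with \<open>a + b \<noteq> 0\<close> have "v = (a + b) * x^2 + b * t^2"
      by simp
    then show ?thesis
      by (rule range_eqI)
  qed
  then show ?thesis
    unfolding range_eq by blast
qed

end

section \<open>Odd characteristic\<close>

lemma card_form_values_diagonal_le: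
  assumes "(2::'a::{field,finite}) \<noteq> 0"
  shows "real (card (form_values a b 0 (k::'a))) \<le> (real CARD('a) + 1) / 2"
proof -
  have "a * x^2 + 0 * x * y + b * y^2 = a * (x^2 + y^2) + (b - a) * y^2" for x y :: 'a
    by (simp add: algebra_simps)
  then have "form_values a b 0 k \<subseteq> (\<lambda>v. a * k + (b - a) * v) ` range (\<lambda>y. y^2)"
    unfolding form_values_def by auto
  then have "card (form_values a b 0 k) \<le> card (range (\<lambda>y::'a. y^2))"
    by (meson card_image_le card_mono finite dual_order.trans)
  also have "\<dots> = card (nonzero_squares :: 'a set) + 1"
    unfolding range_power2_eq using zero_notin_nonzero_squares[where 'a='a]
    by (simp add: card_insert_disjoint)
  finally have "real (card (form_values a b 0 k)) \<le> real (card (nonzero_squares :: 'a set)) + 1"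
    by linarith
  then show ?thesis
    using real_card_nonzero_squares[OF assms] by (simp add: field_simps)
qed

context
  fixes i :: "'a::{field,finite}"
  assumes i: "i^2 = - 1" and two: "(2::'a) \<noteq> 0"
begin

lemma isotropic_pair_iff: "(x \<noteq> 0 \<or> y \<noteq> 0) \<and> x^2 + y^2 = 0 \<longleftrightarrow> y \<noteq> 0 \<and> (x = i * y \<or> x = - i * y)"
proof -
  have "x^2 + y^2 = 0 \<longleftrightarrow> x^2 = (i * y)^2"
    by (simp add: power_mult_distrib i eq_neg_iff_add_eq_0)
  then show ?thesis
    by (auto simp: power2_eq_iff)
qed

lemma isotropic_form_values_eq:
  "isotropic_form_values a b c
     = (*) (b - a + c * i) ` nonzero_squares \<union> (*) (b - a - c * i) ` nonzero_squares"
proof -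
  let ?q = "\<lambda>x y. a * x^2 + c * x * y + b * y^2"
  have minus_i: "(- i)^2 = - 1"
    using i by simp
  have "isotropic_form_values a b c = (\<lambda>y. ?q (i * y) y) ` (UNIV - {0}) \<union> (\<lambda>y. ?q (- i * y) y) ` (UNIV - {0})"
    unfolding isotropic_form_values_def isotropic_pair_iff by blast
  also have "\<dots> = (\<lambda>y. (b - a + c * i) * y^2) ` (UNIV - {0}) \<union> (\<lambda>y. (b - a + c * - i) * y^2) ` (UNIV - {0})"
    by (simp only: form_at_isotropic[OF i] form_at_isotropic[OF minus_i])
  finally show ?thesis
    unfolding nonzero_squares_def image_image by simp
qed

lemma card_form_values_zero_ge:
  assumes "c \<noteq> 0"
  shows "(real CARD('a) - 1) / 2 \<le> real (card (form_values a b (c::'a) 0 - {0}))"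
proof -
  have "(b - a + c * i) - (b - a - c * i) = 2 * (c * i)"
    by (simp add: algebra_simps)
  moreover have "2 * (c * i) \<noteq> 0"
    using assms two i by auto
  ultimately have "b - a + c * i \<noteq> 0 \<or> b - a - c * i \<noteq> 0"
    by auto
  then obtain d where d: "d \<in> {b - a + c * i, b - a - c * i}" "d \<noteq> 0"
    by blast
  then have "(*) d ` nonzero_squares \<subseteq> form_values a b c 0 - {0}"
    using zero_notin_nonzero_squares[where 'a='a]
    by (auto simp: form_values_zero isotropic_form_values_eq)
  then have "card ((*) d ` nonzero_squares) \<le> card (form_values a b c 0 - {0})"
    by (simp add: card_mono)
  with d show ?thesis
    by (simp add: card_image inj_on_mult real_card_nonzero_squares[OF two, symmetric])
qed

lemma ex_sum_two_squares: "\<exists>x y. x^2 + y^2 = (k::'a)"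
proof -
  have four: "(4::'a) \<noteq> 0"
    using two by (metis mult_2_right mult_eq_0_iff numeral_Bit0)
  have "((k + 1) / 2)^2 + (i * (k - 1) / 2)^2 = ((k + 1)^2 + i^2 * (k - 1)^2) / 4"
    by (simp add: power_divide power_mult_distrib)
  also have "\<dots> = k"
    using i four by (simp add: power2_eq_square algebra_simps)
  finally show ?thesis
    by blast
qed

lemma form_values_scalar: "form_values a a 0 k = {k * (a::'a)}"
proof -
  have "a * x^2 + 0 * x * y + a * y^2 = (x^2 + y^2) * a" for x y :: 'a
    by (simp add: algebra_simps)
  then show ?thesis
    unfolding form_values_def using ex_sum_two_squares[of k] by auto
qed

lemma zero_in_isotropic_form_values_scalar: "0 \<in> isotropic_form_values a a (0::'a)"
proof -
  have "0 = a * i^2 + 0 * i * 1 + a * 1^2 \<and> (i \<noteq> 0 \<or> (1::'a) \<noteq> 0) \<and> i^2 + 1^2 = 0"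
    using i by simp
  then show ?thesis
    unfolding isotropic_form_values_def by blast
qed

lemma card_isotropic_form_values_diagonal:
  assumes "a \<noteq> (b::'a)"
  shows "real (card (isotropic_form_values a b 0)) = (real CARD('a) - 1) / 2"
  using assms
  by (simp add: isotropic_form_values_eq card_image inj_on_mult real_card_nonzero_squares[OF two])

lemma card_form_values_zero_diagonal:
  assumes "a \<noteq> (b::'a)"
  shows "real (card (form_values a b 0 0)) = (real CARD('a) + 1) / 2"
proof -
  have "0 \<notin> isotropic_form_values a b 0"
    using assms zero_notin_nonzero_squares[where 'a='a] by (auto simp: isotropic_form_values_eq)
  then show ?thesis
    using card_isotropic_form_values_diagonal[OF assms]
    by (simp add: form_values_zero card_insert_disjoint field_simps)
qed

end

theorem proposition5:
  fixes M N :: "'a::{field,finite}^2^2"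
  assumes "N$1$1 = M$1$1" and "N$2$2 = M$2$2" and "N$2$1 = 0"
    and "N$1$2 = M$1$2 + M$2$1"
  shows "Num0' M = Num0' N \<and> (\<forall>k. Num M k = Num N k)
    \<and> (CARD('a) mod 4 = 3 \<longrightarrow> Num0' M = {})
    \<and> (even (CARD('a)) \<longrightarrow>
          (M$2$2 + M$1$2 + M$2$1 + M$1$1 \<noteq> 0 \<longrightarrow>
             Num0' M = UNIV - {0} \<and>
             (\<forall>k. k \<noteq> 0 \<longrightarrow> real (card (Num M k)) \<ge> real CARD('a) / 2))
        \<and> (M$2$2 + M$1$2 + M$2$1 + M$1$1 = 0 \<longrightarrow>
             Num0' M = {0} \<and>
             (\<forall>k. k \<noteq> 0 \<longrightarrow> Num M k = UNIV \<or> card (Num M k) = 1))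
        \<and> (M$1$2 + M$2$1 = 0 \<and> M$1$1 \<noteq> M$2$2 \<longrightarrow>
             (\<forall>k. k \<noteq> 0 \<longrightarrow> Num M k = UNIV)))
    \<and> (CARD('a) mod 4 = 1 \<longrightarrow>
          (M$1$2 + M$2$1 \<noteq> 0 \<longrightarrow>
             real (card (Num M 0 - {0})) \<ge> (real CARD('a) - 1) / 2)
        \<and> (M$1$2 + M$2$1 = 0 \<longrightarrow>
             (M$1$1 = M$2$2 \<longrightarrow> (\<forall>k. Num M k = {k * M$1$1}) \<and> 0 \<in> Num0' M)
           \<and> (M$1$1 \<noteq> M$2$2 \<longrightarrow>
                (\<forall>k. real (card (Num M k)) \<le> (real CARD('a) + 1) / 2)
              \<and> real (card (Num M 0)) = (real CARD('a) + 1) / 2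
              \<and> real (card (Num0' M)) = (real CARD('a) - 1) / 2)))"
proof -
  define a b c where abc: "a = M$1$1" "b = M$2$2" "c = M$1$2 + M$2$1"
  have Num_eq: "Num M k = form_values a b c k" "Num N k = form_values a b c k" for k
    using assms unfolding abc by (simp_all add: Num_eq_form_values)
  have Num0'_eq: "Num0' M = isotropic_form_values a b c" "Num0' N = isotropic_form_values a b c"
    using assms unfolding abc by (simp_all add: Num0'_eq_isotropic_form_values)
  have trace: "M$2$2 + M$1$2 + M$2$1 + M$1$1 = a + b + c"
    unfolding abc by (simp add: ac_simps)
  have char2: "(2::'a) = 0" if "even CARD('a)"
    using that even_CARD_iff_two_eq_zero by blast
  have odd: "(2::'a) \<noteq> 0" if "odd CARD('a)"
    using that even_CARD_iff_two_eq_zero by blast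
  have two: "(2::'a) \<noteq> 0" if "CARD('a) mod 4 = 1"
    using that by (intro odd) presburger
  obtain i :: 'a where i: "i^2 = - 1" if "CARD('a) mod 4 = 1"
    using two ex_sqrt_minus_one_iff[where 'a='a] by blast
  have no_sqrt: "\<nexists>i::'a. i^2 = - 1" if "CARD('a) mod 4 = 3"
  proof -
    from that have "odd CARD('a)"
      by presburger
    with that show ?thesis
      using odd ex_sqrt_minus_one_iff[where 'a='a] by simp
  qed
  show ?thesis
    unfolding trace unfolding Num_eq Num0'_eq abc[symmetric]
  proof (intro conjI impI allI)
    assume "CARD('a) mod 4 = 3"
    then show "isotropic_form_values a b c = {}"
      by (rule isotropic_form_values_eq_empty[OF no_sqrt])
  next
    assume "even CARD('a)" and "a + b + c \<noteq> 0"
    then show "isotropic_form_values a b c = UNIV - {0}"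
      by (rule char2_isotropic_form_values_nonzero[OF char2])
  next
    fix k
    assume "even CARD('a)" and "a + b + c \<noteq> 0"
    then show "real CARD('a) / 2 \<le> real (card (form_values a b c k))"
      by (rule char2_card_form_values[OF char2])
  next
    assume "even CARD('a)" and "a + b + c = 0"
    then show "isotropic_form_values a b c = {0}"
      by (rule char2_isotropic_form_values_zero[OF char2])
  next
    fix k
    assume "even CARD('a)" and "a + b + c = 0"
    then show "form_values a b c k = UNIV \<or> card (form_values a b c k) = 1"
      by (rule char2_form_values_UNIV_or_singleton[OF char2])
  next
    fix k
    assume "even CARD('a)" and "c = 0 \<and> a \<noteq> b"
    then show "form_values a b c k = UNIV"
      by (intro char2_form_values_UNIV char2) simp_all
  next
    assume q: "CARD('a) mod 4 = 1" and "c \<noteq> 0"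
    from \<open>c \<noteq> 0\<close> show "(real CARD('a) - 1) / 2 \<le> real (card (form_values a b c 0 - {0}))"
      by (rule card_form_values_zero_ge[OF i[OF q] two[OF q]])
  next
    fix k
    assume q: "CARD('a) mod 4 = 1" and "c = 0" and "a = b"
    then show "form_values a b c k = {k * a}"
      using form_values_scalar[OF i[OF q] two[OF q]] by simp
  next
    assume q: "CARD('a) mod 4 = 1" and "c = 0" and "a = b"
    then show "0 \<in> isotropic_form_values a b c"
      using zero_in_isotropic_form_values_scalar[OF i[OF q] two[OF q]] by simp
  next
    fix k
    assume q: "CARD('a) mod 4 = 1" and "c = 0"
    then show "real (card (form_values a b c k)) \<le> (real CARD('a) + 1) / 2"
      using card_form_values_diagonal_le[OF two[OF q]] by simp
  next
    assume q: "CARD('a) mod 4 = 1" and "c = 0" and "a \<noteq> b"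
    then show "real (card (form_values a b c 0)) = (real CARD('a) + 1) / 2"
      using card_form_values_zero_diagonal[OF i[OF q] two[OF q]] by simp
  next
    assume q: "CARD('a) mod 4 = 1" and "c = 0" and "a \<noteq> b"
    then show "real (card (isotropic_form_values a b c)) = (real CARD('a) - 1) / 2"
      using card_isotropic_form_values_diagonal[OF i[OF q] two[OF q]] by simp
  qed simp_all
qed

end
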